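(* Let \((X,d)\) be a metric space. The following statements are equivalent: (i) \(d\) is an ultrametric, i.e. \(d(x,y)\le\max\{d(x,z),d(z,y)\}\) for all \(x,y,z\in X\); (ii) \(f\circ d\) is a metric on \(X\) for every amenable and increasing function \(f\colon[0,\infty)\to[0,\infty)\); (iii) \(f\circ d\) is a metric on \(X\) for every amenable function \(f\colon[0,\infty)\to[0,\infty)\) which satisfies \(f(a)\le 2f(b)\) whenever \(0\le a\le b\).
   Context: A function \(f\colon[0,\infty)\to[0,\infty)\) is amenable if \(f^{-1}(\{0\})=\{0\}\), and increasing if \(a\ge b\) implies \(f(a)\ge f(b)\). *)

theory Defs
  imports "HOL-Analysis.Analysis"
begin

definition is_metric_on :: "'a set \<Rightarrow> ('a \<Rightarrow> 'a \<Rightarrow> real) \<Rightarrow> bool" where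
  "is_metric_on X d \<longleftrightarrow>
     (\<forall>x\<in>X. \<forall>y\<in>X. d x y \<ge> 0) \<and>
     (\<forall>x\<in>X. \<forall>y\<in>X. d x y = 0 \<longleftrightarrow> x = y) \<and>
     (\<forall>x\<in>X. \<forall>y\<in>X. d x y = d y x) \<and>
     (\<forall>x\<in>X. \<forall>y\<in>X. \<forall>z\<in>X. d x y \<le> d x z + d z y)"

definition is_ultrametric_on :: "'a set \<Rightarrow> ('a \<Rightarrow> 'a \<Rightarrow> real) \<Rightarrow> bool" where
  "is_ultrametric_on X d \<longleftrightarrow>
     (\<forall>x\<in>X. \<forall>y\<in>X. \<forall>z\<in>X. d x y \<le> max (d x z) (d z y))"

text \<open>A function f : [0,\<infinity>) \<rightarrow> [0,\<infinity>), represented as a real function whose behaviour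
  on [0,\<infinity>) is all that matters.\<close>
definition nonneg_fun :: "(real \<Rightarrow> real) \<Rightarrow> bool" where
  "nonneg_fun f \<longleftrightarrow> (\<forall>t\<ge>0. f t \<ge> 0)"

definition amenable :: "(real \<Rightarrow> real) \<Rightarrow> bool" where
  "amenable f \<longleftrightarrow> (\<forall>t\<ge>0. f t = 0 \<longleftrightarrow> t = 0)"

definition increasing_on_nonneg :: "(real \<Rightarrow> real) \<Rightarrow> bool" where
  "increasing_on_nonneg f \<longleftrightarrow> (\<forall>a\<ge>0. \<forall>b\<ge>0. a \<ge> b \<longrightarrow> f a \<ge> f b)"

end

theory Submission
  imports Defs
begin

text \<open>In an ultrametric space every triangle is isosceles with its two longest sides equal.
  So if f is amenable and f a \<le> 2 f b for a \<le> b, the triangle inequality for f \<circ> d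
  reduces either to f(c) \<le> f(c) + f(b) or to f(a) \<le> 2 f(c) for the repeated longest side c.
  Conversely, if d(x,y) > m = max(d(x,z), d(z,y)), the increasing step function
  taking the values 0, 1, 3 on {0}, (0,m], (m,\<infinity>) violates the triangle inequality
  at x, y, z.\<close>

lemma is_metric_onD:
  assumes "is_metric_on X d" "x \<in> X" "y \<in> X"
  shows is_metric_on_nonneg: "d x y \<ge> 0"
    and is_metric_on_eq_0_iff: "d x y = 0 \<longleftrightarrow> x = y"
    and is_metric_on_sym: "d x y = d y x"
  using assms by (simp_all add: is_metric_on_def)

lemma is_metric_on_triangle:
  assumes "is_metric_on X d" "x \<in> X" "y \<in> X" "z \<in> X"
  shows "d x y \<le> d x z + d z y"
  using assms unfolding is_metric_on_def by (elim conjE) (drule bspec, assumption)+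

lemma is_metric_onI:
  assumes "\<And>x y. x \<in> X \<Longrightarrow> y \<in> X \<Longrightarrow> d x y \<ge> 0"
    and "\<And>x y. x \<in> X \<Longrightarrow> y \<in> X \<Longrightarrow> d x y = 0 \<longleftrightarrow> x = y"
    and "\<And>x y. x \<in> X \<Longrightarrow> y \<in> X \<Longrightarrow> d x y = d y x"
    and "\<And>x y z. x \<in> X \<Longrightarrow> y \<in> X \<Longrightarrow> z \<in> X \<Longrightarrow> d x y \<le> d x z + d z y"
  shows "is_metric_on X d"
  using assms unfolding is_metric_on_def by simp

lemma is_ultrametric_onD:
  assumes "is_ultrametric_on X d" "x \<in> X" "y \<in> X" "z \<in> X"
  shows "d x y \<le> max (d x z) (d z y)"
  using assms unfolding is_ultrametric_on_def by blast

lemma ultrametric_isosceles: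
  assumes "is_metric_on X d" "is_ultrametric_on X d" "x \<in> X" "y \<in> X" "z \<in> X"
    and "d x y < max (d x z) (d z y)"
  shows "d x z = d z y"
proof -
  have "d x z \<le> max (d x y) (d y z)" "d z y \<le> max (d z x) (d x y)"
    using is_ultrametric_onD[OF assms(2)] assms(3-5) by simp_all
  moreover have "d y z = d z y" "d z x = d x z"
    using is_metric_on_sym[OF assms(1)] assms(3-5) by simp_all
  ultimately show ?thesis using assms(6) by linarith
qed

lemma metric_comp_ultrametric:
  assumes m: "is_metric_on X d" and u: "is_ultrametric_on X d"
    and nn: "nonneg_fun f" and am: "amenable f"
    and doubling: "\<forall>a b. 0 \<le> a \<and> a \<le> b \<longrightarrow> f a \<le> 2 * f b"
  shows "is_metric_on X (\<lambda>x y. f (d x y))"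
proof (rule is_metric_onI)
  fix x y assume xy: "x \<in> X" "y \<in> X"
  have "d x y \<ge> 0" using is_metric_on_nonneg[OF m xy] .
  then show "f (d x y) \<ge> 0" and "f (d x y) = 0 \<longleftrightarrow> x = y"
    using nn am is_metric_on_eq_0_iff[OF m xy] unfolding nonneg_fun_def amenable_def by auto
  show "f (d x y) = f (d y x)" using is_metric_on_sym[OF m xy] by simp
next
  fix x y z assume xyz: "x \<in> X" "y \<in> X" "z \<in> X"
  have "d x y \<ge> 0" "d x z \<ge> 0" "d z y \<ge> 0"
    using is_metric_on_nonneg[OF m] xyz by simp_all
  then have f_nonneg: "f (d x z) \<ge> 0" "f (d z y) \<ge> 0"
    using nn unfolding nonneg_fun_def by auto
  show "f (d x y) \<le> f (d x z) + f (d z y)"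
  proof (cases "d x y < max (d x z) (d z y)")
    case True
    then have "d x z = d z y" using ultrametric_isosceles[OF m u xyz] by blast
    moreover have "f (d x y) \<le> 2 * f (d x z)"
      using doubling True \<open>d x y \<ge> 0\<close> \<open>d x z = d z y\<close> by auto
    ultimately show ?thesis by simp
  next
    case False
    then have "d x y = max (d x z) (d z y)"
      using is_ultrametric_onD[OF u xyz] by linarith
    then show ?thesis using f_nonneg by (auto simp: max_def)
  qed
qed

lemma increasing_imp_doubling:
  assumes "nonneg_fun f" "increasing_on_nonneg f"
  shows "\<forall>a b. 0 \<le> a \<and> a \<le> b \<longrightarrow> f a \<le> 2 * f b"
proof (intro allI impI)
  fix a b :: real assume ab: "0 \<le> a \<and> a \<le> b"
  then have "f a \<le> f b" "f b \<ge> 0"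
    using assms unfolding increasing_on_nonneg_def nonneg_fun_def by auto
  then show "f a \<le> 2 * f b" by linarith
qed

definition step_fun :: "real \<Rightarrow> real \<Rightarrow> real" where
  "step_fun m t = (if t \<le> 0 then 0 else if t \<le> m then 1 else 3)"

lemma step_fun_properties:
  assumes "m \<ge> 0"
  shows "nonneg_fun (step_fun m)" "amenable (step_fun m)" "increasing_on_nonneg (step_fun m)"
    "\<forall>a b. 0 \<le> a \<and> a \<le> b \<longrightarrow> step_fun m a \<le> 2 * step_fun m b"
  using assms
  unfolding nonneg_fun_def amenable_def increasing_on_nonneg_def step_fun_def by auto

lemma ultrametric_if_step_fun_metric:
  assumes m: "is_metric_on X d"
    and step: "\<And>r. r \<ge> 0 \<Longrightarrow> is_metric_on X (\<lambda>x y. step_fun r (d x y))"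
  shows "is_ultrametric_on X d"
  unfolding is_ultrametric_on_def
proof (intro ballI)
  fix x y z assume xyz: "x \<in> X" "y \<in> X" "z \<in> X"
  define r where "r = max (d x z) (d z y)"
  have "r \<ge> 0" using is_metric_on_nonneg[OF m xyz(1,3)] unfolding r_def by linarith
  have "step_fun r (d x y) \<le> step_fun r (d x z) + step_fun r (d z y)"
    using is_metric_on_triangle[OF step[OF \<open>r \<ge> 0\<close>] xyz] .
  moreover have "step_fun r (d x z) \<le> 1" "step_fun r (d z y) \<le> 1"
    unfolding step_fun_def r_def by auto
  ultimately have "step_fun r (d x y) \<noteq> 3" by linarith
  then show "d x y \<le> max (d x z) (d z y)"
    using \<open>r \<ge> 0\<close> unfolding step_fun_def r_def by (auto split: if_splits)
qed

theorem theorem2p12: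
  fixes X :: "'a set" and d :: "'a \<Rightarrow> 'a \<Rightarrow> real"
  assumes "is_metric_on X d"
  shows "(is_ultrametric_on X d
           \<longleftrightarrow> (\<forall>f. nonneg_fun f \<and> amenable f \<and> increasing_on_nonneg f
                   \<longrightarrow> is_metric_on X (\<lambda>x y. f (d x y))))
       \<and> (is_ultrametric_on X d
           \<longleftrightarrow> (\<forall>f. nonneg_fun f \<and> amenable f
                     \<and> (\<forall>a b. 0 \<le> a \<and> a \<le> b \<longrightarrow> f a \<le> 2 * f b)
                   \<longrightarrow> is_metric_on X (\<lambda>x y. f (d x y))))"
proof (intro conjI iffI allI impI)
  fix f assume "is_ultrametric_on X d" "nonneg_fun f \<and> amenable f \<and> increasing_on_nonneg f"
  then show "is_metric_on X (\<lambda>x y. f (d x y))"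
    using metric_comp_ultrametric[OF assms] increasing_imp_doubling by blast
next
  assume "\<forall>f. nonneg_fun f \<and> amenable f \<and> increasing_on_nonneg f
            \<longrightarrow> is_metric_on X (\<lambda>x y. f (d x y))"
  then show "is_ultrametric_on X d"
    using step_fun_properties by (intro ultrametric_if_step_fun_metric[OF assms]) blast
next
  fix f assume "is_ultrametric_on X d" "nonneg_fun f \<and> amenable f
                   \<and> (\<forall>a b. 0 \<le> a \<and> a \<le> b \<longrightarrow> f a \<le> 2 * f b)"
  then show "is_metric_on X (\<lambda>x y. f (d x y))"
    using metric_comp_ultrametric[OF assms] by blast
next
  assume "\<forall>f. nonneg_fun f \<and> amenable f \<and> (\<forall>a b. 0 \<le> a \<and> a \<le> b \<longrightarrow> f a \<le> 2 * f b)
            \<longrightarrow> is_metric_on X (\<lambda>x y. f (d x y))"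
  then show "is_ultrametric_on X d"
    using step_fun_properties by (intro ultrametric_if_step_fun_metric[OF assms]) blast
qed

end
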